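(* Let $v:\mathcal Q\to\mathbb R$ be the valuation induced by an assignment message, and let $\mathbf p\in\mathbb R^n$. Consider the linear program (MCF) in variables $y_I$, $I\in\mathcal I$: minimize $\sum_{i=1}^n\sum_{j\in R_i}(p_i-v_j)\,y_{\{j\}}$ subject to $y_I-\sum_{K\in s_0(I)}y_K=0$ for all non-singleton $I\in\mathcal T_0$; $\sum_{K\in s_i(I)}y_K-y_I=0$ for all non-singleton $I\in\mathcal T_i$, $i=1,\dots,n$; $\sum_{i=1}^n y_{R_i}-y_{R_0}=0$; $\ell(I)\le y_I\le u(I)$ for all $I\in\mathcal I$. Then $\mathbf q\in D(\mathbf p)$ if and only if there is an integral optimal solution $\mathbf y$ of (MCF) with $q_i=y_{R_i}$ for all $i=1,\dots,n$.
   Context: There are $n\ge2$ goods; $D(\mathbf p)=\arg\max_{\mathbf q\in\mathcal Q}v(\mathbf q)-\langle\mathbf p,\mathbf q\rangle$. A family $\mathcal T$ of subsets of a finite set $J$ is a tree if it is nonempty and any two members with nonempty intersection are nested. For $K\in\mathcal T$, its predecessor is the inclusion-minimal $L\in\mathcal T$ with $L\supsetneq K$ (if it exists), and $s_{\mathcal T}(L)$ is the set of $K\in\mathcal T$ whose predecessor is $L$. An assignment message consists of variables $J=\{1,\dots,m\}$, each $j$ associated with a good $k_j\in\{1,\dots,n\}$ and value $v_j\in\mathbb R$, with $R_i=\{j:k_j=i\}$ nonempty for all $i\ge1$ and $R_0:=J$; and a family $\mathcal I=\mathcal T_0\cup\dots\cup\mathcal T_n$ of subsets of $J$ with integral bounds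 $\ell(I)\le 0\le u(I)$, where each $\mathcal T_i$ is a tree, for $i\ge1$ $\mathcal T_i\subseteq\mathcal P(R_i)$ contains $R_i$ and all $\{j\}$, $j\in R_i$, and $\mathcal T_0$ contains $J$ and all $\{j\}$, $j\in J$. We write $s_i(L):=s_{\mathcal T_i}(L)$. It is assumed (without loss of generality) that the trees intersect only in terminal nodes: $\mathcal T_0\cap\mathcal T_i=\{\{j\}:j\in R_i\}$ and $\mathcal T_i\cap\mathcal T_k=\emptyset$ for distinct $i,k\ge1$. The induced valuation is $v(\mathbf q)=\max\{\sum_jv_jx_j:\mathbf x\in\mathbb Z^m,\ \ell(I)\le\sum_{j\in I}x_j\le u(I)\ \forall I\in\mathcal I,\ \sum_{j\in R_i}x_j=q_i\ \forall i\}$ on the set $\mathcal Q$ of $\mathbf q\in\mathbb Z^n$ for which this is feasible. *)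

theory Defs
  imports Complex_Main
begin

text \<open>Vectors in R^n / Z^n are functions on nat,
  of which only the coordinates 1..n are ever used.\<close>

definition is_tree :: "'a set set \<Rightarrow> bool" where
  "is_tree T \<longleftrightarrow> T \<noteq> {} \<and> (\<forall>A\<in>T. \<forall>B\<in>T. A \<inter> B \<noteq> {} \<longrightarrow> A \<subseteq> B \<or> B \<subseteq> A)"

definition is_pred :: "'a set set \<Rightarrow> 'a set \<Rightarrow> 'a set \<Rightarrow> bool" where
  "is_pred T K L \<longleftrightarrow> L \<in> T \<and> K \<subset> L \<and> \<not> (\<exists>M\<in>T. K \<subset> M \<and> M \<subset> L)"

definition succs :: "'a set set \<Rightarrow> 'a set \<Rightarrow> 'a set set" where
  "succs T L = {K \<in> T. is_pred T K L}"

definition Jset :: "nat \<Rightarrow> nat set" where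
  "Jset m = {1..m}"

definition Rset :: "nat \<Rightarrow> (nat \<Rightarrow> nat) \<Rightarrow> nat \<Rightarrow> nat set" where
  "Rset m kk i = (if i = 0 then Jset m else {j \<in> Jset m. kk j = i})"

definition Ifam :: "nat \<Rightarrow> (nat \<Rightarrow> nat set set) \<Rightarrow> nat set set" where
  "Ifam n T = (\<Union>i\<in>{0..n}. T i)"

definition assignment_message ::
  "nat \<Rightarrow> nat \<Rightarrow> (nat \<Rightarrow> nat) \<Rightarrow> (nat \<Rightarrow> nat set set) \<Rightarrow> (nat set \<Rightarrow> int) \<Rightarrow> (nat set \<Rightarrow> int) \<Rightarrow> bool"
where
  "assignment_message n m kk T l u \<longleftrightarrow>
     (\<forall>j\<in>Jset m. kk j \<in> {1..n}) \<and>
     (\<forall>i\<in>{1..n}. Rset m kk i \<noteq> {}) \<and>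
     is_tree (T 0) \<and> T 0 \<subseteq> Pow (Jset m) \<and> Jset m \<in> T 0 \<and> (\<forall>j\<in>Jset m. {j} \<in> T 0) \<and>
     (\<forall>i\<in>{1..n}. is_tree (T i) \<and> T i \<subseteq> Pow (Rset m kk i) \<and> Rset m kk i \<in> T i \<and>
        (\<forall>j\<in>Rset m kk i. {j} \<in> T i)) \<and>
     (\<forall>I\<in>Ifam n T. l I \<le> 0 \<and> 0 \<le> u I) \<and>
     (\<forall>i\<in>{1..n}. T 0 \<inter> T i = {{j} | j. j \<in> Rset m kk i}) \<and>
     (\<forall>i\<in>{1..n}. \<forall>k\<in>{1..n}. i \<noteq> k \<longrightarrow> T i \<inter> T k = {})"

definition feasible_x ::
  "nat \<Rightarrow> nat \<Rightarrow> (nat \<Rightarrow> nat) \<Rightarrow> (nat \<Rightarrow> nat set set) \<Rightarrow> (nat set \<Rightarrow> int) \<Rightarrow> (nat set \<Rightarrow> int)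
    \<Rightarrow> (nat \<Rightarrow> int) \<Rightarrow> (nat \<Rightarrow> int) \<Rightarrow> bool"
where
  "feasible_x n m kk T l u q x \<longleftrightarrow>
     (\<forall>I\<in>Ifam n T. l I \<le> (\<Sum>j\<in>I. x j) \<and> (\<Sum>j\<in>I. x j) \<le> u I) \<and>
     (\<forall>i\<in>{1..n}. (\<Sum>j\<in>Rset m kk i. x j) = q i)"

definition Qset ::
  "nat \<Rightarrow> nat \<Rightarrow> (nat \<Rightarrow> nat) \<Rightarrow> (nat \<Rightarrow> nat set set) \<Rightarrow> (nat set \<Rightarrow> int) \<Rightarrow> (nat set \<Rightarrow> int)
    \<Rightarrow> (nat \<Rightarrow> int) set"
where
  "Qset n m kk T l u = {q. \<exists>x. feasible_x n m kk T l u q x}"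

definition induced_val ::
  "nat \<Rightarrow> nat \<Rightarrow> (nat \<Rightarrow> nat) \<Rightarrow> (nat \<Rightarrow> real) \<Rightarrow> (nat \<Rightarrow> nat set set) \<Rightarrow> (nat set \<Rightarrow> int)
    \<Rightarrow> (nat set \<Rightarrow> int) \<Rightarrow> (nat \<Rightarrow> int) \<Rightarrow> real"
where
  "induced_val n m kk vv T l u q =
     Max {(\<Sum>j\<in>Jset m. vv j * real_of_int (x j)) | x. feasible_x n m kk T l u q x}"

definition demand ::
  "nat \<Rightarrow> nat \<Rightarrow> (nat \<Rightarrow> nat) \<Rightarrow> (nat \<Rightarrow> real) \<Rightarrow> (nat \<Rightarrow> nat set set) \<Rightarrow> (nat set \<Rightarrow> int)
    \<Rightarrow> (nat set \<Rightarrow> int) \<Rightarrow> (nat \<Rightarrow> real) \<Rightarrow> (nat \<Rightarrow> int) set"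
where
  "demand n m kk vv T l u p =
     {q \<in> Qset n m kk T l u. \<forall>q'\<in>Qset n m kk T l u.
        induced_val n m kk vv T l u q' - (\<Sum>i\<in>{1..n}. p i * real_of_int (q' i))
        \<le> induced_val n m kk vv T l u q - (\<Sum>i\<in>{1..n}. p i * real_of_int (q i))}"

definition is_singleton_set :: "'a set \<Rightarrow> bool" where
  "is_singleton_set I \<longleftrightarrow> (\<exists>j. I = {j})"

definition mcf_feasible ::
  "nat \<Rightarrow> nat \<Rightarrow> (nat \<Rightarrow> nat) \<Rightarrow> (nat \<Rightarrow> nat set set) \<Rightarrow> (nat set \<Rightarrow> int) \<Rightarrow> (nat set \<Rightarrow> int)
    \<Rightarrow> (nat set \<Rightarrow> real) \<Rightarrow> bool"
where
  "mcf_feasible n m kk T l u y \<longleftrightarrow>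
     (\<forall>I\<in>T 0. \<not> is_singleton_set I \<longrightarrow> y I - (\<Sum>K\<in>succs (T 0) I. y K) = 0) \<and>
     (\<forall>i\<in>{1..n}. \<forall>I\<in>T i. \<not> is_singleton_set I \<longrightarrow> (\<Sum>K\<in>succs (T i) I. y K) - y I = 0) \<and>
     (\<Sum>i\<in>{1..n}. y (Rset m kk i)) - y (Rset m kk 0) = 0 \<and>
     (\<forall>I\<in>Ifam n T. real_of_int (l I) \<le> y I \<and> y I \<le> real_of_int (u I))"

definition mcf_obj ::
  "nat \<Rightarrow> nat \<Rightarrow> (nat \<Rightarrow> nat) \<Rightarrow> (nat \<Rightarrow> real) \<Rightarrow> (nat \<Rightarrow> real) \<Rightarrow> (nat set \<Rightarrow> real) \<Rightarrow> real"
where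
  "mcf_obj n m kk vv p y = (\<Sum>i\<in>{1..n}. \<Sum>j\<in>Rset m kk i. (p i - vv j) * y {j})"

definition mcf_optimal ::
  "nat \<Rightarrow> nat \<Rightarrow> (nat \<Rightarrow> nat) \<Rightarrow> (nat \<Rightarrow> real) \<Rightarrow> (nat \<Rightarrow> nat set set) \<Rightarrow> (nat set \<Rightarrow> int)
    \<Rightarrow> (nat set \<Rightarrow> int) \<Rightarrow> (nat \<Rightarrow> real) \<Rightarrow> (nat set \<Rightarrow> real) \<Rightarrow> bool"
where
  "mcf_optimal n m kk vv T l u p y \<longleftrightarrow>
     mcf_feasible n m kk T l u y \<and>
     (\<forall>y'. mcf_feasible n m kk T l u y' \<longrightarrow> mcf_obj n m kk vv p y \<le> mcf_obj n m kk vv p y')"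

end

theory Submission
  imports Defs "HOL-Library.FuncSet" "HOL-Library.Disjoint_Sets"
begin

text \<open>(MCF) is a minimum-cost circulation problem in a network whose arcs are the sets of the
  message, so it has an integral optimum: the fractional arcs of a feasible flow never meet a
  constrained node exactly once, hence carry a nonzero circulation, along which the flow can be
  pushed without raising the cost until one more arc becomes integral. Integral feasible flows are
  exactly the flows \<open>y\<^sub>I = \<Sum>\<^bsub>j\<in>I\<^esub> x\<^sub>j\<close> of feasible integral assignments \<open>x\<close> for the bundle
  \<open>q\<^sub>i = y\<^bsub>R\<^sub>i\<^esub>\<close>, and their cost is \<open>\<langle>p, q\<rangle> - \<Sum>\<^sub>j v\<^sub>j x\<^sub>j\<close>. So the optimal value of (MCF) is
  the minimum of \<open>\<langle>p, q\<rangle> - v(q)\<close> over \<open>q \<in> Q\<close>, attained exactly at the flows of demanded bundles.\<close>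

section \<open>Integral flows\<close>

definition degree :: "('e \<Rightarrow> 'v) \<Rightarrow> ('e \<Rightarrow> 'v) \<Rightarrow> 'e set \<Rightarrow> 'v \<Rightarrow> nat" where
  "degree src tgt E v = card {e\<in>E. tgt e = v} + card {e\<in>E. src e = v}"

definition excess :: "('e \<Rightarrow> 'v) \<Rightarrow> ('e \<Rightarrow> 'v) \<Rightarrow> 'e set \<Rightarrow> ('e \<Rightarrow> real) \<Rightarrow> 'v \<Rightarrow> real" where
  "excess src tgt E f v = (\<Sum>e\<in>{e\<in>E. tgt e = v}. f e) - (\<Sum>e\<in>{e\<in>E. src e = v}. f e)"

lemma excess_insert:
  assumes "finite F" "e \<notin> F"
  shows "excess src tgt (insert e F) f v =
     excess src tgt F f v + (if tgt e = v then f e else 0) - (if src e = v then f e else 0)"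
proof -
  have "(\<Sum>x\<in>{x\<in>insert e F. g x = v}. f x) = (if g e = v then f e else 0) + (\<Sum>x\<in>{x\<in>F. g x = v}. f x)"
    for g :: "'a \<Rightarrow> 'b"
  proof -
    have "{x\<in>insert e F. g x = v} = (if g e = v then insert e {x\<in>F. g x = v} else {x\<in>F. g x = v})"
      by auto
    then show ?thesis using assms by simp
  qed
  then show ?thesis unfolding excess_def by simp
qed

lemma excess_union:
  assumes "finite A" "finite B" "A \<inter> B = {}"
  shows "excess src tgt (A \<union> B) f v = excess src tgt A f v + excess src tgt B f v"
proof -
  have "(\<Sum>e\<in>{e\<in>A \<union> B. g e = v}. f e) = (\<Sum>e\<in>{e\<in>A. g e = v}. f e) + (\<Sum>e\<in>{e\<in>B. g e = v}. f e)"
    for g :: "'a \<Rightarrow> 'b"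
    using assms by (subst sum.union_disjoint[symmetric]) (auto intro: sum.cong)
  then show ?thesis unfolding excess_def by simp
qed

lemma excess_add_scaled:
  "excess src tgt E (\<lambda>e. x e + t * d e) v = excess src tgt E x v + t * excess src tgt E d v"
  unfolding excess_def by (simp add: sum.distrib sum_distrib_left algebra_simps)

lemma excess_supported:
  assumes "finite E" "A \<subseteq> E" "\<forall>e. e \<notin> A \<longrightarrow> d e = 0"
  shows "excess src tgt E d v = excess src tgt A d v"
proof -
  have "excess src tgt (E - A) d v = 0" unfolding excess_def using assms(3) by simp
  moreover have "excess src tgt E d v = excess src tgt A d v + excess src tgt (E - A) d v"
    using excess_union[of A "E - A"] assms(1,2)
    by (metis Diff_disjoint Diff_partition finite_Diff finite_subset)
  ultimately show ?thesis by simp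
qed

lemma degree_insert:
  assumes "finite F" "e \<notin> F"
  shows "degree src tgt (insert e F) v =
     degree src tgt F v + (if tgt e = v then 1 else 0) + (if src e = v then 1 else 0)"
proof -
  have "card {x\<in>insert e F. g x = v} = card {x\<in>F. g x = v} + (if g e = v then 1 else 0)"
    for g :: "'a \<Rightarrow> 'b"
  proof -
    have "{x\<in>insert e F. g x = v} = (if g e = v then insert e {x\<in>F. g x = v} else {x\<in>F. g x = v})"
      by auto
    then show ?thesis using assms by simp
  qed
  then show ?thesis unfolding degree_def by simp
qed

text \<open>Contracting an arc from \<open>a\<close> to \<open>b\<close> merges node \<open>b\<close> into node \<open>a\<close>; the merged node is
  constrained iff both of its parts were.\<close>

definition merge :: "'v \<Rightarrow> 'v \<Rightarrow> 'v \<Rightarrow> 'v" where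
  "merge a b w = (if w = b then a else w)"

definition merged_nodes :: "'v \<Rightarrow> 'v \<Rightarrow> 'v set \<Rightarrow> 'v set" where
  "merged_nodes a b C = (C - {a, b}) \<union> (if a \<in> C \<and> b \<in> C then {a} else {})"

lemma filter_merge:
  assumes "a \<noteq> b"
  shows "{e\<in>F. merge a b (f e) = a} = {e\<in>F. f e = a} \<union> {e\<in>F. f e = b}"
    and "{e\<in>F. f e = a} \<inter> {e\<in>F. f e = b} = {}"
    and "v \<noteq> a \<Longrightarrow> v \<noteq> b \<Longrightarrow> {e\<in>F. merge a b (f e) = v} = {e\<in>F. f e = v}"
  using assms by (auto simp: merge_def)

lemma degree_merge:
  assumes "finite F" "a \<noteq> b"
  shows "degree (merge a b \<circ> src) (merge a b \<circ> tgt) F a = degree src tgt F a + degree src tgt F b"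
    and "v \<noteq> a \<Longrightarrow> v \<noteq> b \<Longrightarrow> degree (merge a b \<circ> src) (merge a b \<circ> tgt) F v = degree src tgt F v"
  using assms by (simp_all add: degree_def filter_merge card_Un_disjoint)

lemma excess_merge:
  assumes "finite F" "a \<noteq> b"
  shows "excess (merge a b \<circ> src) (merge a b \<circ> tgt) F f a = excess src tgt F f a + excess src tgt F f b"
    and "v \<noteq> a \<Longrightarrow> v \<noteq> b \<Longrightarrow> excess (merge a b \<circ> src) (merge a b \<circ> tgt) F f v = excess src tgt F f v"
  using assms by (simp_all add: excess_def filter_merge sum.union_disjoint)

lemma degree_condition_merge:
  fixes src tgt :: "'e \<Rightarrow> 'v" and e :: 'e
  defines "a \<equiv> src e" and "b \<equiv> tgt e"
  assumes "finite F" "e \<notin> F" "a \<noteq> b" and deg: "\<forall>v\<in>C. degree src tgt (insert e F) v \<noteq> 1"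
  shows "\<forall>v\<in>merged_nodes a b C. degree (merge a b \<circ> src) (merge a b \<circ> tgt) F v \<noteq> 1"
proof
  fix v assume "v \<in> merged_nodes a b C"
  then consider "v = a" "a \<in> C" "b \<in> C" | "v \<noteq> a" "v \<noteq> b" "v \<in> C"
    unfolding merged_nodes_def by (auto split: if_splits)
  then show "degree (merge a b \<circ> src) (merge a b \<circ> tgt) F v \<noteq> 1"
  proof cases
    case 1
    then have "degree src tgt F a \<noteq> 0" "degree src tgt F b \<noteq> 0"
      using deg degree_insert[OF assms(3,4), of src tgt] \<open>a \<noteq> b\<close> by (auto simp: a_def b_def)
    then show ?thesis using 1 degree_merge(1)[OF assms(3,5)] by simp
  next
    case 2
    then show ?thesis
      using deg[rule_format, OF 2(3)] degree_merge(2)[OF assms(3,5) 2(1,2), of src tgt] degree_insert[OF assms(3,4), of src tgt v]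
      by (simp add: a_def b_def)
  qed
qed

text \<open>A circulation of the contracted network extends to the contracted arc, with the flow on the
  arc chosen to repair the balance at whichever of its ends is constrained.\<close>

lemma balance_unmerge:
  fixes src tgt :: "'e \<Rightarrow> 'v" and e :: 'e
  defines "a \<equiv> src e" and "b \<equiv> tgt e"
  assumes "finite F" "e \<notin> F" "a \<noteq> b"
    and bal: "\<forall>v\<in>merged_nodes a b C. excess (merge a b \<circ> src) (merge a b \<circ> tgt) F d v = 0"
  shows "\<exists>t. \<forall>v\<in>C. excess src tgt (insert e F) (d(e := t)) v = 0"
proof -
  define t where "t = (if a \<in> C then excess src tgt F d a else - excess src tgt F d b)"
  have "excess src tgt F (d(e := t)) v = excess src tgt F d v" for v
    unfolding excess_def using assms(4) by (intro arg_cong2[where f = minus] sum.cong) auto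
  then have excess_ext: "excess src tgt (insert e F) (d(e := t)) v =
      excess src tgt F d v + (if b = v then t else 0) - (if a = v then t else 0)" for v
    using excess_insert[OF assms(3,4), of src tgt "d(e := t)" v] by (simp add: a_def b_def)
  have "excess src tgt (insert e F) (d(e := t)) v = 0" if "v \<in> C" for v
  proof -
    consider "v = a" | "v = b" "a \<in> C" | "v = b" "a \<notin> C" | "v \<noteq> a" "v \<noteq> b" by blast
    then show ?thesis
    proof cases
      case 2
      then have "excess src tgt F d a + excess src tgt F d b = 0"
        using bal excess_merge(1)[OF assms(3,5), of src tgt d] that by (simp add: merged_nodes_def)
      then show ?thesis using 2 excess_ext[of v] \<open>a \<noteq> b\<close> by (simp add: t_def)
    next
      case 4
      then show ?thesis
        using bal excess_ext[of v] excess_merge(2)[OF assms(3,5), of v src tgt d] that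
        by (simp add: merged_nodes_def)
    qed (use excess_ext[of v] \<open>a \<noteq> b\<close> that in \<open>simp_all add: t_def\<close>)
  qed
  then show ?thesis by blast
qed

lemma exists_circulation:
  assumes "finite E" "E \<noteq> {}" "\<forall>v\<in>C. degree src tgt E v \<noteq> 1"
  shows "\<exists>d. (\<forall>e. e \<notin> E \<longrightarrow> d e = 0) \<and> (\<exists>e\<in>E. d e \<noteq> 0) \<and> (\<forall>v\<in>C. excess src tgt E d v = 0)"
  using assms
proof (induction E arbitrary: src tgt C rule: finite_induct)
  case (insert e F)
  define a b where "a = src e" and "b = tgt e"
  have "a = b \<or> (a \<notin> C \<and> b \<notin> C)" if "F = {}"
  proof -
    have "degree src tgt F v = 0" for v using that by (simp add: degree_def)
    then have "degree src tgt (insert e F) a = 1" "degree src tgt (insert e F) b = 1" if "a \<noteq> b"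
      using degree_insert[OF insert(1,2), of src tgt] that by (simp_all add: a_def b_def)
    then show ?thesis using insert.prems(2) by blast
  qed
  then consider "a = b \<or> (a \<notin> C \<and> b \<notin> C)" | "a \<noteq> b" "F \<noteq> {}"
    by blast
  then show ?case
  proof cases
    case 1
    define d where "d = (\<lambda>x. if x = e then 1 else 0 :: real)"
    have "excess src tgt F d v = 0" for v
      using insert(2) by (simp add: excess_def d_def sum.neutral)
    then have "excess src tgt (insert e F) d v = (if b = v then 1 else 0) - (if a = v then 1 else 0)" for v
      using excess_insert[OF insert(1,2), of src tgt d v] by (simp add: a_def b_def d_def)
    then show ?thesis using 1 by (intro exI[of _ d]) (auto simp: d_def)
  next
    case 2
    obtain d where d: "\<forall>x. x \<notin> F \<longrightarrow> d x = 0" "\<exists>x\<in>F. d x \<noteq> 0"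
      "\<forall>v\<in>merged_nodes a b C. excess (merge a b \<circ> src) (merge a b \<circ> tgt) F d v = 0"
      using insert.IH[OF 2(2)] degree_condition_merge[OF insert(1,2) _ insert.prems(2)] 2(1)
      unfolding a_def b_def by blast
    then obtain t where "\<forall>v\<in>C. excess src tgt (insert e F) (d(e := t)) v = 0"
      using balance_unmerge[OF insert(1,2)] 2(1) unfolding a_def b_def by blast
    moreover have "\<forall>x. x \<notin> insert e F \<longrightarrow> (d(e := t)) x = 0" "\<exists>x\<in>insert e F. (d(e := t)) x \<noteq> 0"
      using d(1,2) insert(2) by auto
    ultimately show ?thesis by blast
  qed
qed simp

lemma excess_Ints: "\<forall>e\<in>E. x e \<in> \<int> \<Longrightarrow> excess src tgt E x v \<in> \<int>"
  unfolding excess_def by (intro Ints_diff Ints_sum) auto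

lemma degree_fractional_arcs:
  assumes "finite E" "excess src tgt E x v = 0"
  shows "degree src tgt {e\<in>E. x e \<notin> \<int>} v \<noteq> 1"
proof
  define Ef where "Ef = {e\<in>E. x e \<notin> \<int>}"
  assume "degree src tgt {e\<in>E. x e \<notin> \<int>} v = 1"
  then have "card {e\<in>Ef. tgt e = v} + card {e\<in>Ef. src e = v} = 1"
    unfolding degree_def Ef_def .
  moreover have "finite {e\<in>Ef. g e = v}" for g :: "'a \<Rightarrow> 'b"
    using assms(1) by (simp add: Ef_def)
  ultimately obtain e0 where "e0 \<in> Ef" and incident:
    "({e\<in>Ef. tgt e = v} = {e0} \<and> {e\<in>Ef. src e = v} = {}) \<or>
     ({e\<in>Ef. tgt e = v} = {} \<and> {e\<in>Ef. src e = v} = {e0})"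
    by (auto simp: add_is_1 card_1_singleton_iff)
  moreover have "excess src tgt Ef x v = x e0 \<or> excess src tgt Ef x v = - x e0"
    using incident unfolding excess_def
    by (elim disjE conjE) (simp_all (no_asm_simp))
  moreover have "excess src tgt Ef x v \<in> \<int>"
  proof -
    have "E = Ef \<union> (E - Ef)" "Ef \<inter> (E - Ef) = {}" by (auto simp: Ef_def)
    then have "excess src tgt Ef x v = - excess src tgt (E - Ef) x v"
      using assms excess_union[of Ef "E - Ef" src tgt x v] by (simp add: Ef_def)
    moreover have "excess src tgt (E - Ef) x v \<in> \<int>" by (rule excess_Ints) (simp add: Ef_def)
    ultimately show ?thesis by simp
  qed
  ultimately show False by (auto simp: Ef_def dest: Ints_minus)
qed

lemma exists_step_to_integer:
  fixes x d :: "'e \<Rightarrow> real"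
  assumes "finite D" "D \<noteq> {}" "\<forall>e\<in>D. d e \<noteq> 0"
  shows "\<exists>t\<ge>0. (\<forall>e\<in>D. of_int \<lfloor>x e\<rfloor> \<le> x e + t * d e \<and> x e + t * d e \<le> of_int \<lceil>x e\<rceil>) \<and>
           (\<exists>e\<in>D. x e + t * d e \<in> \<int>)"
proof -
  define room where "room e = (if d e > 0 then of_int \<lceil>x e\<rceil> - x e else x e - of_int \<lfloor>x e\<rfloor>)" for e
  define t where "t = Min ((\<lambda>e. room e / \<bar>d e\<bar>) ` D)"
  have floor_ceiling: "of_int \<lfloor>x e\<rfloor> \<le> x e" "x e \<le> of_int \<lceil>x e\<rceil>" for e
    by linarith+
  then have room: "0 \<le> room e" for e
    unfolding room_def by simp
  have "t \<in> (\<lambda>e. room e / \<bar>d e\<bar>) ` D" unfolding t_def using assms(1,2) by (intro Min_in) auto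
  then obtain e0 where e0: "e0 \<in> D" "t = room e0 / \<bar>d e0\<bar>" by blast
  then have "t \<ge> 0" using room by simp
  have step: "t * \<bar>d e\<bar> \<le> room e" if "e \<in> D" for e
  proof -
    have "t \<le> room e / \<bar>d e\<bar>" unfolding t_def using assms(1) that by simp
    then show ?thesis using assms(3) that by (simp add: pos_le_divide_eq)
  qed
  have "of_int \<lfloor>x e\<rfloor> \<le> x e + t * d e \<and> x e + t * d e \<le> of_int \<lceil>x e\<rceil>" if "e \<in> D" for e
  proof (cases "d e > 0")
    case True
    then have "0 \<le> t * d e" "t * d e \<le> of_int \<lceil>x e\<rceil> - x e"
      using step[OF that] \<open>t \<ge> 0\<close> by (simp_all add: room_def)
    then show ?thesis using floor_ceiling[of e] by linarith
  next
    case False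
    then have "t * d e \<le> 0" "- (t * d e) \<le> x e - of_int \<lfloor>x e\<rfloor>"
      using step[OF that] \<open>t \<ge> 0\<close> by (simp_all add: room_def mult_nonneg_nonpos)
    then show ?thesis using floor_ceiling[of e] by linarith
  qed
  moreover have "x e0 + t * d e0 \<in> \<int>"
    using e0 assms(3) unfolding room_def by (cases "d e0 > 0") auto
  ultimately show ?thesis using e0(1) \<open>t \<ge> 0\<close> by blast
qed

lemma exists_descent_circulation:
  assumes fin: "finite E"
    and lin: "\<And>x d t. obj (\<lambda>e. x e + t * d e) = obj x + t * obj d"
    and cons: "\<forall>v\<in>C. excess src tgt E x v = 0"
    and frac: "{e\<in>E. x e \<notin> \<int>} \<noteq> {}"
  shows "\<exists>d. (\<forall>e. e \<notin> {e\<in>E. x e \<notin> \<int>} \<longrightarrow> d e = 0) \<and> (\<exists>e\<in>E. x e \<notin> \<int> \<and> d e \<noteq> 0) \<and>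
    (\<forall>v\<in>C. excess src tgt E d v = 0) \<and> obj d \<le> 0"
proof -
  define Ef where "Ef = {e\<in>E. x e \<notin> \<int>}"
  have "finite Ef" "Ef \<subseteq> E" using fin by (auto simp: Ef_def)
  moreover have "\<forall>v\<in>C. degree src tgt Ef v \<noteq> 1"
    unfolding Ef_def using cons by (intro ballI degree_fractional_arcs[OF fin]) auto
  ultimately obtain d where d: "\<forall>e. e \<notin> Ef \<longrightarrow> d e = 0" "\<exists>e\<in>Ef. d e \<noteq> 0"
    "\<forall>v\<in>C. excess src tgt Ef d v = 0"
    using exists_circulation[of Ef C src tgt] frac unfolding Ef_def by blast
  define s :: real where "s = (if obj d \<le> 0 then 1 else -1)"
  have "obj (\<lambda>e. 0) = 0" using lin[of "\<lambda>e. 0" 1 "\<lambda>e. 0"] by simp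
  then have "obj (\<lambda>e. s * d e) \<le> 0" using lin[of "\<lambda>e. 0" s d] by (simp add: s_def)
  moreover have "excess src tgt E (\<lambda>e. s * d e) v = 0" if "v \<in> C" for v
  proof -
    have "excess src tgt E d v = 0"
      using excess_supported[OF fin \<open>Ef \<subseteq> E\<close> d(1), of src tgt v] d(3) that by simp
    then show ?thesis using excess_add_scaled[of src tgt E "\<lambda>e. 0" s d v] by (simp add: excess_def)
  qed
  ultimately show ?thesis using d(1,2) unfolding Ef_def by (intro exI[of _ "\<lambda>e. s * d e"]) (auto simp: s_def)
qed

lemma reduce_fractional_arcs:
  assumes fin: "finite E"
    and lin: "\<And>x d t. obj (\<lambda>e. x e + t * d e) = obj x + t * obj d"
    and bnd: "\<forall>e\<in>E. of_int (lo e) \<le> x e \<and> x e \<le> of_int (up e)"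
    and cons: "\<forall>v\<in>C. excess src tgt E x v = 0"
    and frac: "{e\<in>E. x e \<notin> \<int>} \<noteq> {}"
  shows "\<exists>x'. (\<forall>e\<in>E. of_int (lo e) \<le> x' e \<and> x' e \<le> of_int (up e)) \<and>
    (\<forall>v\<in>C. excess src tgt E x' v = 0) \<and> obj x' \<le> obj x \<and>
    {e\<in>E. x' e \<notin> \<int>} \<subset> {e\<in>E. x e \<notin> \<int>}"
proof -
  define Ef where "Ef = {e\<in>E. x e \<notin> \<int>}"
  obtain d where d: "\<forall>e. e \<notin> Ef \<longrightarrow> d e = 0" "\<exists>e\<in>E. x e \<notin> \<int> \<and> d e \<noteq> 0"
    "\<forall>v\<in>C. excess src tgt E d v = 0" "obj d \<le> 0"
    using exists_descent_circulation[where obj = obj, OF fin lin cons frac] unfolding Ef_def by blast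
  define D where "D = {e\<in>Ef. d e \<noteq> 0}"
  have "finite D" "D \<noteq> {}" "\<forall>e\<in>D. d e \<noteq> 0"
    using fin d(2) by (auto simp: D_def Ef_def)
  then obtain t e0 where "t \<ge> 0"
    and t: "\<forall>e\<in>D. of_int \<lfloor>x e\<rfloor> \<le> x e + t * d e \<and> x e + t * d e \<le> of_int \<lceil>x e\<rceil>"
    and e0: "e0 \<in> D" "x e0 + t * d e0 \<in> \<int>"
    using exists_step_to_integer[of D d x] by blast
  define x' where "x' e = x e + t * d e" for e
  have unchanged: "x' e = x e" if "e \<notin> D" for e
    using that d(1) by (auto simp: x'_def D_def)
  have "\<forall>e\<in>E. of_int (lo e) \<le> x' e \<and> x' e \<le> of_int (up e)"
  proof
    fix e assume "e \<in> E"
    then have "lo e \<le> \<lfloor>x e\<rfloor>" "\<lceil>x e\<rceil> \<le> up e"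
      using bnd by (simp_all add: le_floor_iff ceiling_le_iff)
    then show "of_int (lo e) \<le> x' e \<and> x' e \<le> of_int (up e)"
      using bnd \<open>e \<in> E\<close> t unchanged[of e] unfolding x'_def by (cases "e \<in> D") force+
  qed
  moreover have "\<forall>v\<in>C. excess src tgt E x' v = 0"
    using cons d(3) unfolding x'_def excess_add_scaled by simp
  moreover have "obj x' \<le> obj x"
    using lin[of x t d] \<open>t \<ge> 0\<close> d(4) unfolding x'_def by (simp add: mult_nonneg_nonpos)
  moreover have "{e\<in>E. x' e \<notin> \<int>} \<subset> Ef"
  proof -
    have "e \<in> Ef" if "e \<in> E" "x' e \<notin> \<int>" for e
      using that unchanged[of e] by (auto simp: Ef_def D_def)
    then have "{e\<in>E. x' e \<notin> \<int>} \<subseteq> Ef - {e0}" using e0(2) by (auto simp: x'_def)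
    then show ?thesis using e0(1) by (auto simp: D_def)
  qed
  ultimately show ?thesis unfolding Ef_def by blast
qed

lemma integral_flow:
  assumes fin: "finite E"
    and lin: "\<And>x d t. obj (\<lambda>e. x e + t * d e) = obj x + t * obj d"
    and bnd: "\<forall>e\<in>E. of_int (lo e) \<le> x e \<and> x e \<le> of_int (up e)"
    and cons: "\<forall>v\<in>C. excess src tgt E x v = 0"
  shows "\<exists>z. (\<forall>e\<in>E. z e \<in> \<int>) \<and> (\<forall>e\<in>E. of_int (lo e) \<le> z e \<and> z e \<le> of_int (up e)) \<and>
    (\<forall>v\<in>C. excess src tgt E z v = 0) \<and> obj z \<le> obj x"
  using bnd cons
proof (induction "card {e\<in>E. x e \<notin> \<int>}" arbitrary: x rule: less_induct)
  case less
  show ?case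
  proof (cases "{e\<in>E. x e \<notin> \<int>} = {}")
    case True
    then show ?thesis using less.prems by blast
  next
    case False
    then obtain x' where x': "\<forall>e\<in>E. of_int (lo e) \<le> x' e \<and> x' e \<le> of_int (up e)"
      "\<forall>v\<in>C. excess src tgt E x' v = 0" "obj x' \<le> obj x"
      "{e\<in>E. x' e \<notin> \<int>} \<subset> {e\<in>E. x e \<notin> \<int>}"
      using reduce_fractional_arcs[where obj = obj, OF fin lin less.prems] by blast
    have "card {e\<in>E. x' e \<notin> \<int>} < card {e\<in>E. x e \<notin> \<int>}"
      using psubset_card_mono[OF _ x'(4)] fin by simp
    then show ?thesis using less.hyps[OF _ x'(1,2)] x'(3) by force
  qed
qed

lemma owner_fibre:
  assumes "disjoint_family_on A C" "v \<in> C" "A v \<subseteq> E"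
  shows "{e\<in>E. (if \<exists>w\<in>C. e \<in> A w then Some (THE w. w \<in> C \<and> e \<in> A w) else None) = Some v} = A v"
proof -
  have owner: "(THE w. w \<in> C \<and> e \<in> A w) = w" if "w \<in> C" "e \<in> A w" for e w
    using assms(1) that by (intro the_equality) (auto simp: disjoint_family_on_def)
  show ?thesis
  proof (intro equalityI subsetI)
    fix e assume "e \<in> {e\<in>E. (if \<exists>w\<in>C. e \<in> A w then Some (THE w. w \<in> C \<and> e \<in> A w) else None) = Some v}"
    then obtain w where "w \<in> C" "e \<in> A w" "(THE w. w \<in> C \<and> e \<in> A w) = v"
      by (auto split: if_splits)
    then show "e \<in> A v" using owner by metis
  next
    fix e assume "e \<in> A v"
    then show "e \<in> {e\<in>E. (if \<exists>w\<in>C. e \<in> A w then Some (THE w. w \<in> C \<and> e \<in> A w) else None) = Some v}"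
      using owner[of v e] assms(2,3) by auto
  qed
qed

theorem integral_flow_in_out:
  fixes In Out :: "'v \<Rightarrow> 'e set" and x :: "'e \<Rightarrow> real"
  assumes fin: "finite E" and arcs: "\<forall>v\<in>C. In v \<subseteq> E \<and> Out v \<subseteq> E"
    and disj: "disjoint_family_on In C" "disjoint_family_on Out C"
    and lin: "\<And>x d t. obj (\<lambda>e. x e + t * d e) = obj x + t * obj d"
    and bnd: "\<forall>e\<in>E. of_int (lo e) \<le> x e \<and> x e \<le> of_int (up e)"
    and cons: "\<forall>v\<in>C. sum x (In v) = sum x (Out v)"
  shows "\<exists>z. (\<forall>e\<in>E. z e \<in> \<int>) \<and> (\<forall>e\<in>E. of_int (lo e) \<le> z e \<and> z e \<le> of_int (up e)) \<and>
    (\<forall>v\<in>C. sum z (In v) = sum z (Out v)) \<and> obj z \<le> obj x"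
proof -
  define tgt where "tgt e = (if \<exists>v\<in>C. e \<in> In v then Some (THE v. v \<in> C \<and> e \<in> In v) else None)" for e
  define src where "src e = (if \<exists>v\<in>C. e \<in> Out v then Some (THE v. v \<in> C \<and> e \<in> Out v) else None)" for e
  have excess_node: "excess src tgt E f (Some v) = sum f (In v) - sum f (Out v)" if "v \<in> C" for v f
  proof -
    have "In v \<subseteq> E" "Out v \<subseteq> E" using arcs that by auto
    then show ?thesis unfolding excess_def tgt_def src_def
      by (simp only: owner_fibre[OF disj(1) that] owner_fibre[OF disj(2) that])
  qed
  have "\<forall>v\<in>Some ` C. excess src tgt E x v = 0" using cons excess_node by auto
  from integral_flow[where obj = obj, OF fin lin bnd this] obtain z where "\<forall>e\<in>E. z e \<in> \<int>" "\<forall>e\<in>E. of_int (lo e) \<le> z e \<and> z e \<le> of_int (up e)"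
    "\<forall>v\<in>Some ` C. excess src tgt E z v = 0" "obj z \<le> obj x"
    by blast
  then show ?thesis using excess_node by (intro exI[of _ z]) auto
qed

section \<open>Trees of subsets\<close>

locale tree_of_subsets =
  fixes A :: "'a set" and T :: "'a set set"
  assumes finite_ground: "finite A" and tree: "is_tree T" and subsets: "T \<subseteq> Pow A"
    and singletons: "\<forall>j\<in>A. {j} \<in> T"
begin

lemma finite_member: "K \<in> T \<Longrightarrow> finite K"
  using subsets finite_ground by (auto intro: finite_subset)

lemma succs_subset: "K \<in> succs T L \<Longrightarrow> K \<in> T \<and> K \<subset> L \<and> L \<in> T"
  unfolding succs_def is_pred_def by auto

lemma Union_succs:
  assumes "I \<in> T" "\<not> is_singleton_set I"
  shows "\<Union>(succs T I) = I"
proof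
  show "I \<subseteq> \<Union>(succs T I)"
  proof
    fix j assume "j \<in> I"
    define M where "M = {K\<in>T. j \<in> K \<and> K \<subset> I}"
    have "{j} \<in> M"
      using \<open>j \<in> I\<close> assms subsets singletons by (auto simp: M_def is_singleton_set_def)
    moreover have "finite M"
      using subsets finite_ground by (auto simp: M_def intro: finite_subset[of _ "Pow A"])
    ultimately obtain K where K: "K \<in> M" "\<forall>K'\<in>M. K \<subseteq> K' \<longrightarrow> K = K'"
      using finite_has_maximal[of M] by blast
    then have "is_pred T K I"
      using assms(1) unfolding is_pred_def M_def by blast
    then show "j \<in> \<Union>(succs T I)" using K(1) by (auto simp: succs_def M_def)
  qed
qed (auto simp: succs_def is_pred_def)

lemma disjoint_succs: "disjoint (succs T I)"
proof (rule disjointI)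
  fix K K' assume K: "K \<in> succs T I" "K' \<in> succs T I" "K \<noteq> K'"
  show "K \<inter> K' = {}"
  proof (rule ccontr)
    assume "K \<inter> K' \<noteq> {}"
    then have "K \<subseteq> K' \<or> K' \<subseteq> K" using tree K(1,2) succs_subset unfolding is_tree_def by blast
    then show False using K unfolding succs_def is_pred_def by blast
  qed
qed

lemma sum_over_succs:
  assumes "I \<in> T" "\<not> is_singleton_set I"
  shows "(\<Sum>j\<in>I. f j) = (\<Sum>K\<in>succs T I. \<Sum>j\<in>K. f j)"
proof -
  have "finite (succs T I)"
    using subsets finite_ground by (auto simp: succs_def intro: finite_subset[of _ "Pow A"])
  moreover have "\<forall>K\<in>succs T I. finite K" using succs_subset finite_member by blast
  ultimately show ?thesis
    using sum.Union_disjoint[of "succs T I" f] disjoint_succs Union_succs[OF assms]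
    by (simp add: disjoint_def)
qed

lemma succs_same_parent:
  assumes "\<not> is_singleton_set L" "K \<in> succs T L" "K \<in> succs T L'"
  shows "L = L'"
proof -
  have K: "is_pred T K L" "is_pred T K L'" using assms(2,3) by (simp_all add: succs_def)
  have "K \<noteq> {}"
  proof
    assume "K = {}"
    moreover obtain j where "j \<in> L" "{j} \<subset> L"
      using assms(1) K(1) unfolding is_singleton_set_def is_pred_def by blast
    moreover have "{j} \<in> T"
      using \<open>j \<in> L\<close> K(1) subsets singletons unfolding is_pred_def by blast
    ultimately show False using K(1) unfolding is_pred_def by blast
  qed
  then have "L \<inter> L' \<noteq> {}" using K unfolding is_pred_def by blast
  moreover have "L \<in> T" "L' \<in> T" using K unfolding is_pred_def by simp_all
  ultimately have "L \<subseteq> L' \<or> L' \<subseteq> L" using tree unfolding is_tree_def by blast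
  moreover have "\<not> L \<subset> L'" "\<not> L' \<subset> L" using K unfolding is_pred_def by auto
  ultimately show ?thesis by blast
qed

end

section \<open>The network of an assignment message\<close>

locale assignment_market =
  fixes n m :: nat and kk :: "nat \<Rightarrow> nat" and vv :: "nat \<Rightarrow> real" and T :: "nat \<Rightarrow> nat set set"
    and l u :: "nat set \<Rightarrow> int" and p :: "nat \<Rightarrow> real"
  assumes message: "assignment_message n m kk T l u"
begin

abbreviation R :: "nat \<Rightarrow> nat set" where "R \<equiv> Rset m kk"
abbreviation feasible :: "(nat set \<Rightarrow> real) \<Rightarrow> bool" where "feasible \<equiv> mcf_feasible n m kk T l u"
abbreviation cost :: "(nat set \<Rightarrow> real) \<Rightarrow> real" where "cost \<equiv> mcf_obj n m kk vv p"
abbreviation val :: "(nat \<Rightarrow> int) \<Rightarrow> real" where "val \<equiv> induced_val n m kk vv T l u"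
abbreviation bundles :: "(nat \<Rightarrow> int) set" where "bundles \<equiv> Qset n m kk T l u"
abbreviation price :: "(nat \<Rightarrow> int) \<Rightarrow> real" where
  "price q \<equiv> \<Sum>i\<in>{1..n}. p i * real_of_int (q i)"
abbreviation worth :: "(nat \<Rightarrow> int) \<Rightarrow> real" where
  "worth x \<equiv> \<Sum>j\<in>Jset m. vv j * real_of_int (x j)"

lemma R_0: "R 0 = Jset m"
  by (simp add: Rset_def)

lemma finite_J: "finite (Jset m)"
  by (simp add: Jset_def)

lemma R_subset_J: "R i \<subseteq> Jset m"
  by (auto simp: Rset_def)

lemma good_of_variable: "j \<in> Jset m \<Longrightarrow> kk j \<in> {1..n}"
  using message by (simp add: assignment_message_def)

lemma R_nonempty: "i \<in> {1..n} \<Longrightarrow> R i \<noteq> {}"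
  using message by (simp add: assignment_message_def)

lemma tree_T: "i \<le> n \<Longrightarrow> tree_of_subsets (R i) (T i)"
  using message finite_subset[OF R_subset_J finite_J]
  by (cases "i = 0") (auto simp: assignment_message_def tree_of_subsets_def R_0 finite_J)

lemma root_in_T: "i \<le> n \<Longrightarrow> R i \<in> T i"
  using message by (cases "i = 0") (auto simp: assignment_message_def R_0)

lemma tree_index_unique:
  assumes "i \<le> n" "k \<le> n" "I \<in> T i" "I \<in> T k" "\<not> is_singleton_set I \<or> (i \<noteq> 0 \<and> k \<noteq> 0)"
  shows "i = k"
proof (rule ccontr)
  assume "i \<noteq> k"
  have shared: "T 0 \<inter> T i = {{j} | j. j \<in> R i}" if "i \<in> {1..n}" for i
    using message that unfolding assignment_message_def by blast
  have disjoint: "T i \<inter> T k = {}" if "i \<in> {1..n}" "k \<in> {1..n}" "i \<noteq> k" for i k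
    using message that unfolding assignment_message_def by blast
  consider "i = 0" "k \<in> {1..n}" | "k = 0" "i \<in> {1..n}" | "i \<in> {1..n}" "k \<in> {1..n}"
    using assms(1,2) \<open>i \<noteq> k\<close> by fastforce
  then show False
  proof cases
    case 1
    then have "I \<in> {{j} | j. j \<in> R k}" using shared[of k] assms(3,4) by blast
    then show False using assms(5) 1(1) by (auto simp: is_singleton_set_def)
  next
    case 2
    then have "I \<in> {{j} | j. j \<in> R i}" using shared[of i] assms(3,4) by blast
    then show False using assms(5) 2(1) by (auto simp: is_singleton_set_def)
  next
    case 3
    then show False using disjoint[of i k] assms(3,4) \<open>i \<noteq> k\<close> by blast
  qed
qed

lemma Ifam_iff: "I \<in> Ifam n T \<longleftrightarrow> (\<exists>i\<le>n. I \<in> T i)"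
  by (auto simp: Ifam_def)

lemma Ifam_subset_J: "I \<in> Ifam n T \<Longrightarrow> I \<subseteq> Jset m"
  using tree_T R_subset_J unfolding Ifam_iff tree_of_subsets_def by blast

lemma finite_Ifam: "finite (Ifam n T)"
  using finite_subset[of "Ifam n T" "Pow (Jset m)"] Ifam_subset_J finite_J by blast

lemma singleton_in_Ifam: "j \<in> Jset m \<Longrightarrow> {j} \<in> Ifam n T"
  using tree_T[of 0] unfolding Ifam_iff tree_of_subsets_def R_0 by auto

lemma sum_over_goods: "(\<Sum>i\<in>{1..n}. \<Sum>j\<in>R i. f j) = (\<Sum>j\<in>Jset m. f j)"
proof -
  have "(\<Sum>i\<in>{1..n}. \<Sum>j\<in>R i. f j) = (\<Sum>i\<in>{1..n}. sum f {j\<in>Jset m. kk j = i})"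
    by (intro sum.cong) (auto simp: Rset_def)
  also have "\<dots> = sum f (Jset m)"
    using good_of_variable finite_J by (intro sum.group) auto
  finally show ?thesis .
qed

lemma feasible_conservation:
  assumes "feasible y" "i \<le> n" "I \<in> T i" "\<not> is_singleton_set I"
  shows "y I = (\<Sum>K\<in>succs (T i) I. y K)"
  using assms by (cases "i = 0") (auto simp: mcf_feasible_def)

lemma feasible_additive:
  assumes "feasible y" "I \<in> Ifam n T"
  shows "y I = (\<Sum>j\<in>I. y {j})"
proof -
  obtain i where i: "i \<le> n" "I \<in> T i" using assms(2) unfolding Ifam_iff by blast
  interpret tree_of_subsets "R i" "T i" using tree_T[OF i(1)] .
  from i(2) show ?thesis
  proof (induction "card I" arbitrary: I rule: less_induct)
    case less
    show ?case
    proof (cases "is_singleton_set I")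
      case False
      have "y K = (\<Sum>j\<in>K. y {j})" if "K \<in> succs (T i) I" for K
        using less.hyps succs_subset[OF that] psubset_card_mono finite_member less.prems by blast
      then have "y I = (\<Sum>K\<in>succs (T i) I. \<Sum>j\<in>K. y {j})"
        using feasible_conservation[OF assms(1) i(1) less.prems False] by simp
      then show ?thesis using sum_over_succs[OF less.prems False, of "\<lambda>j. y {j}"] by simp
    qed (auto simp: is_singleton_set_def)
  qed
qed

lemma feasible_setsum:
  fixes x :: "nat \<Rightarrow> real"
  assumes "\<forall>I\<in>Ifam n T. of_int (l I) \<le> (\<Sum>j\<in>I. x j) \<and> (\<Sum>j\<in>I. x j) \<le> of_int (u I)"
  shows "feasible (\<lambda>I. \<Sum>j\<in>I. x j)"
proof -
  have "(\<Sum>j\<in>I. x j) = (\<Sum>K\<in>succs (T i) I. \<Sum>j\<in>K. x j)"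
    if "i \<le> n" "I \<in> T i" "\<not> is_singleton_set I" for i I
    using tree_of_subsets.sum_over_succs[OF tree_T[OF that(1)] that(2,3)] .
  then show ?thesis
    using assms sum_over_goods[of x] by (auto simp: mcf_feasible_def R_0)
qed

lemma cost_of_additive_flow:
  assumes "\<forall>i\<in>{1..n}. y (R i) = (\<Sum>j\<in>R i. y {j})"
  shows "cost y = (\<Sum>i\<in>{1..n}. p i * y (R i)) - (\<Sum>j\<in>Jset m. vv j * y {j})"
proof -
  have "cost y = (\<Sum>i\<in>{1..n}. p i * (\<Sum>j\<in>R i. y {j}) - (\<Sum>j\<in>R i. vv j * y {j}))"
    unfolding mcf_obj_def
    by (intro sum.cong) (auto simp: sum_distrib_left sum_subtractf[symmetric] algebra_simps)
  also have "\<dots> = (\<Sum>i\<in>{1..n}. p i * y (R i)) - (\<Sum>j\<in>Jset m. vv j * y {j})"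
    using assms sum_over_goods[of "\<lambda>j. vv j * y {j}"] by (simp add: sum_subtractf)
  finally show ?thesis .
qed

lemma R_in_Ifam: "i \<in> {1..n} \<Longrightarrow> R i \<in> Ifam n T"
  using root_in_T unfolding Ifam_iff by auto

lemma assignment_flow:
  assumes x: "feasible_x n m kk T l u q x"
  defines "y \<equiv> \<lambda>I. \<Sum>j\<in>I. real_of_int (x j)"
  shows "feasible y" "\<forall>I\<in>Ifam n T. y I \<in> \<int>" "\<forall>i\<in>{1..n}. real_of_int (q i) = y (R i)"
    and "cost y = price q - worth x"
proof -
  have sums: "\<forall>I\<in>Ifam n T. l I \<le> (\<Sum>j\<in>I. x j) \<and> (\<Sum>j\<in>I. x j) \<le> u I"
    "\<forall>i\<in>{1..n}. (\<Sum>j\<in>R i. x j) = q i"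
    using x by (simp_all add: feasible_x_def)
  show "feasible y"
    unfolding y_def using sums(1) by (intro feasible_setsum) (simp flip: of_int_sum)
  show "\<forall>I\<in>Ifam n T. y I \<in> \<int>" by (auto simp: y_def intro!: Ints_sum)
  show R_q: "\<forall>i\<in>{1..n}. real_of_int (q i) = y (R i)"
    using sums(2) by (simp add: y_def flip: of_int_sum)
  have "cost y = (\<Sum>i\<in>{1..n}. p i * y (R i)) - (\<Sum>j\<in>Jset m. vv j * y {j})"
    by (rule cost_of_additive_flow) (simp add: y_def)
  then show "cost y = price q - worth x" using R_q by (simp add: y_def)
qed

lemma flow_assignment:
  assumes y: "feasible y" "\<forall>I\<in>Ifam n T. y I \<in> \<int>" "\<forall>i\<in>{1..n}. real_of_int (q i) = y (R i)"
  defines "x \<equiv> \<lambda>j. \<lfloor>y {j}\<rfloor>"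
  shows "feasible_x n m kk T l u q x" and "cost y = price q - worth x"
proof -
  have x_eq: "real_of_int (x j) = y {j}" if "j \<in> Jset m" for j
    using y(2) singleton_in_Ifam[OF that] by (auto simp: x_def elim!: Ints_cases)
  have sum_eq: "y I = real_of_int (\<Sum>j\<in>I. x j)" if "I \<in> Ifam n T" for I
    using feasible_additive[OF y(1) that] Ifam_subset_J[OF that] x_eq
    by (auto simp: subset_eq intro: sum.cong)
  have "\<forall>I\<in>Ifam n T. real_of_int (l I) \<le> y I \<and> y I \<le> real_of_int (u I)"
    using y(1) by (simp add: mcf_feasible_def)
  then show "feasible_x n m kk T l u q x"
    using sum_eq y(3) R_in_Ifam unfolding feasible_x_def by (metis of_int_le_iff of_int_eq_iff)
  have "cost y = (\<Sum>i\<in>{1..n}. p i * y (R i)) - (\<Sum>j\<in>Jset m. vv j * y {j})"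
    using feasible_additive[OF y(1) R_in_Ifam] by (intro cost_of_additive_flow) blast
  then show "cost y = price q - worth x" using y(3) x_eq by simp
qed

lemma finite_worths: "finite {worth x | x. feasible_x n m kk T l u q x}"
proof -
  have "{worth x | x. feasible_x n m kk T l u q x} \<subseteq> worth ` (PiE (Jset m) (\<lambda>j. {l {j}..u {j}}))"
  proof clarify
    fix x assume "feasible_x n m kk T l u q x"
    then have "restrict x (Jset m) \<in> PiE (Jset m) (\<lambda>j. {l {j}..u {j}})"
      using singleton_in_Ifam by (fastforce simp: feasible_x_def)
    moreover have "worth x = worth (restrict x (Jset m))" by simp
    ultimately show "worth x \<in> worth ` (PiE (Jset m) (\<lambda>j. {l {j}..u {j}}))" by blast
  qed
  moreover have "finite (PiE (Jset m) (\<lambda>j. {l {j}..u {j}}))" using finite_J by (intro finite_PiE) auto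
  ultimately show ?thesis by (meson finite_imageI finite_subset)
qed

lemma worth_le_val: "feasible_x n m kk T l u q x \<Longrightarrow> worth x \<le> val q"
  unfolding induced_val_def using finite_worths by (intro Max_ge) auto

lemma val_attained:
  assumes "q \<in> bundles"
  obtains x where "feasible_x n m kk T l u q x" "val q = worth x"
proof -
  have "val q \<in> {worth x | x. feasible_x n m kk T l u q x}"
    unfolding induced_val_def using finite_worths assms by (intro Max_in) (auto simp: Qset_def)
  then show ?thesis using that by blast
qed

text \<open>The network behind (MCF): its arcs are the sets of the family. Flow runs from the root
  \<open>Jset m\<close> down the tree \<open>T 0\<close> to the singletons, up each tree \<open>T i\<close> to its root \<open>R i\<close>, and
  back to \<open>Jset m\<close> through the junction node \<open>None\<close>.\<close>

definition nodes :: "(nat \<times> nat set) option set" where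
  "nodes = insert None {Some (i, I) | i I. i \<le> n \<and> I \<in> T i \<and> \<not> is_singleton_set I}"

definition arcs_in :: "(nat \<times> nat set) option \<Rightarrow> nat set set" where
  "arcs_in v = (case v of None \<Rightarrow> R ` {1..n} | Some (i, I) \<Rightarrow> if i = 0 then {I} else succs (T i) I)"

definition arcs_out :: "(nat \<times> nat set) option \<Rightarrow> nat set set" where
  "arcs_out v = (case v of None \<Rightarrow> {Jset m} | Some (i, I) \<Rightarrow> if i = 0 then succs (T 0) I else {I})"

lemma node_cases:
  assumes "v \<in> nodes"
  obtains (junction) "v = None"
    | (top) I where "v = Some (0, I)" "I \<in> T 0" "\<not> is_singleton_set I"
    | (bottom) i I where "v = Some (i, I)" "i \<in> {1..n}" "I \<in> T i" "\<not> is_singleton_set I"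
proof -
  consider "v = None" | i I where "v = Some (i, I)" "i \<le> n" "I \<in> T i" "\<not> is_singleton_set I"
    using assms unfolding nodes_def by blast
  then show thesis
  proof cases
    case (2 i I)
    then show ?thesis using top bottom by (cases "i = 0") auto
  qed (rule junction)
qed

lemma T_subset_R: "i \<le> n \<Longrightarrow> I \<in> T i \<Longrightarrow> I \<subseteq> R i"
  using tree_T unfolding tree_of_subsets_def by blast

lemma succs_in_T: "i \<le> n \<Longrightarrow> K \<in> succs (T i) L \<Longrightarrow> K \<in> T i \<and> K \<subset> L \<and> L \<in> T i"
  using tree_of_subsets.succs_subset[OF tree_T] by blast

lemma root_not_top_arc: "i \<in> {1..n} \<Longrightarrow> I \<in> T 0 \<Longrightarrow> \<not> is_singleton_set I \<Longrightarrow> R i \<noteq> I"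
  using tree_index_unique[of i 0 I] root_in_T[of i] by auto

lemma root_not_succ: "i \<in> {1..n} \<Longrightarrow> k \<in> {1..n} \<Longrightarrow> R i \<notin> succs (T k) K"
  using tree_index_unique[of i k "R i"] root_in_T[of i] succs_in_T[of k "R i" K] T_subset_R[of k K] by auto

lemma nonsingleton_not_succ:
  "i \<le> n \<Longrightarrow> k \<le> n \<Longrightarrow> i \<noteq> k \<Longrightarrow> I \<in> T i \<Longrightarrow> \<not> is_singleton_set I \<Longrightarrow> I \<notin> succs (T k) K"
  using tree_index_unique[of i k I] succs_in_T[of k I K] by auto

lemma same_succ:
  assumes "i \<le> n" "k \<le> n" "I \<in> T i" "\<not> is_singleton_set I" "e \<in> succs (T i) I" "e \<in> succs (T k) K"
    and "i = k \<or> (i \<noteq> 0 \<and> k \<noteq> 0)"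
  shows "i = k \<and> I = K"
  using assms tree_index_unique[of i k e] succs_in_T[of i e I] succs_in_T[of k e K]
    tree_of_subsets.succs_same_parent[OF tree_T[of i]] by auto

lemma disjoint_arcs_in: "disjoint_family_on arcs_in nodes"
  unfolding disjoint_family_on_def
proof (intro ballI impI, rule ccontr)
  fix v w assume v: "v \<in> nodes" and w: "w \<in> nodes" and "v \<noteq> w" "arcs_in v \<inter> arcs_in w \<noteq> {}"
  then obtain e where e: "e \<in> arcs_in v" "e \<in> arcs_in w" by blast
  have root_arc: "\<exists>i\<in>{1..n}. e = R i" if "e \<in> arcs_in None" using that by (auto simp: arcs_in_def)
  from v show False
  proof (cases rule: node_cases)
    case junction
    from w show False
    proof (cases rule: node_cases)
      case (top K)
      then show False using junction e root_arc root_not_top_arc by (auto simp: arcs_in_def)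
    next
      case (bottom k K)
      then show False using junction e root_arc root_not_succ by (auto simp: arcs_in_def)
    qed (use junction \<open>v \<noteq> w\<close> in simp)
  next
    case (top I)
    note v_top = top
    from w show False
    proof (cases rule: node_cases)
      case junction
      then show False using v_top e root_arc root_not_top_arc by (auto simp: arcs_in_def)
    next
      case (top K)
      then show False using v_top e \<open>v \<noteq> w\<close> by (simp add: arcs_in_def)
    next
      case (bottom k K)
      then show False using v_top e nonsingleton_not_succ[of 0 k I K] by (simp add: arcs_in_def)
    qed
  next
    case (bottom i I)
    note v_bottom = bottom
    from w show False
    proof (cases rule: node_cases)
      case junction
      then show False using v_bottom e root_arc root_not_succ by (auto simp: arcs_in_def)
    next
      case (top K)
      then show False using v_bottom e nonsingleton_not_succ[of 0 i K I] by (simp add: arcs_in_def)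
    next
      case (bottom k K)
      then show False using v_bottom e same_succ[of i k I e K] \<open>v \<noteq> w\<close> by (simp add: arcs_in_def)
    qed
  qed
qed

lemma J_not_succ: "Jset m \<notin> succs (T 0) L"
  using succs_in_T[of 0 "Jset m" L] T_subset_R[of 0 L] by (auto simp: R_0)

lemma disjoint_arcs_out: "disjoint_family_on arcs_out nodes"
  unfolding disjoint_family_on_def
proof (intro ballI impI, rule ccontr)
  fix v w assume v: "v \<in> nodes" and w: "w \<in> nodes" and "v \<noteq> w" "arcs_out v \<inter> arcs_out w \<noteq> {}"
  then obtain e where e: "e \<in> arcs_out v" "e \<in> arcs_out w" by blast
  have J_not_bottom: "Jset m \<noteq> I" if "i \<in> {1..n}" "I \<in> T i" "\<not> is_singleton_set I" for i I
    using tree_index_unique[of 0 i I] root_in_T[of 0] that by (auto simp: R_0)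
  from v show False
  proof (cases rule: node_cases)
    case junction
    from w show False
    proof (cases rule: node_cases)
      case (top K)
      then show False using junction e J_not_succ by (simp add: arcs_out_def)
    next
      case (bottom k K)
      then show False using junction e J_not_bottom[of k K] by (simp add: arcs_out_def)
    qed (use junction \<open>v \<noteq> w\<close> in simp)
  next
    case (top I)
    note v_top = top
    from w show False
    proof (cases rule: node_cases)
      case junction
      then show False using v_top e J_not_succ by (simp add: arcs_out_def)
    next
      case (top K)
      then show False using v_top e same_succ[of 0 0 I e K] \<open>v \<noteq> w\<close> by (simp add: arcs_out_def)
    next
      case (bottom k K)
      then show False using v_top e nonsingleton_not_succ[of k 0 K I] by (simp add: arcs_out_def)
    qed
  next
    case (bottom i I)
    note v_bottom = bottom
    from w show False
    proof (cases rule: node_cases)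
      case junction
      then show False using v_bottom e J_not_bottom[of i I] by (simp add: arcs_out_def)
    next
      case (top K)
      then show False using v_bottom e nonsingleton_not_succ[of i 0 I K] by (simp add: arcs_out_def)
    next
      case (bottom k K)
      then show False using v_bottom e tree_index_unique[of i k I] \<open>v \<noteq> w\<close> by (simp add: arcs_out_def)
    qed
  qed
qed

lemma arcs_subset_Ifam: "v \<in> nodes \<Longrightarrow> arcs_in v \<subseteq> Ifam n T \<and> arcs_out v \<subseteq> Ifam n T"
proof -
  have T_in: "I \<in> Ifam n T" if "i \<le> n" "I \<in> T i" for i I using that unfolding Ifam_iff by blast
  then have "K \<in> Ifam n T" if "i \<le> n" "K \<in> succs (T i) L" for i K L using that succs_in_T by blast
  then show "v \<in> nodes \<Longrightarrow> ?thesis"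
    using T_in T_in[of 0] root_in_T root_in_T[of 0]
    by (elim node_cases) (auto simp: arcs_in_def arcs_out_def R_0)
qed

lemma inj_on_R: "inj_on R {1..n}"
proof (rule inj_onI)
  fix i k assume "i \<in> {1..n}" "k \<in> {1..n}" "R i = R k"
  moreover obtain j where "j \<in> R i" using R_nonempty \<open>i \<in> {1..n}\<close> by blast
  ultimately show "i = k" by (auto simp: Rset_def)
qed

lemma ball_nodes:
  "(\<forall>v\<in>nodes. P v) \<longleftrightarrow> P None \<and> (\<forall>I\<in>T 0. \<not> is_singleton_set I \<longrightarrow> P (Some (0, I))) \<and>
     (\<forall>i\<in>{1..n}. \<forall>I\<in>T i. \<not> is_singleton_set I \<longrightarrow> P (Some (i, I)))"
proof
  assume "\<forall>v\<in>nodes. P v"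
  then show "P None \<and> (\<forall>I\<in>T 0. \<not> is_singleton_set I \<longrightarrow> P (Some (0, I))) \<and>
     (\<forall>i\<in>{1..n}. \<forall>I\<in>T i. \<not> is_singleton_set I \<longrightarrow> P (Some (i, I)))"
    by (auto simp: nodes_def)
qed (auto elim: node_cases)

lemma feasible_iff_network:
  "feasible y \<longleftrightarrow> (\<forall>I\<in>Ifam n T. of_int (l I) \<le> y I \<and> y I \<le> of_int (u I)) \<and>
     (\<forall>v\<in>nodes. sum y (arcs_in v) = sum y (arcs_out v))"
proof -
  have "sum y (arcs_in None) = (\<Sum>i\<in>{1..n}. y (R i))"
    unfolding arcs_in_def using sum.reindex[OF inj_on_R, of y] by simp
  then show ?thesis
    unfolding mcf_feasible_def ball_nodes by (auto simp: arcs_in_def arcs_out_def R_0)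
qed

lemma cost_add_scaled: "cost (\<lambda>I. y I + t * d I) = cost y + t * cost d"
proof -
  have "cost (\<lambda>I. y I + t * d I) =
      (\<Sum>i\<in>{1..n}. \<Sum>j\<in>R i. (p i - vv j) * y {j} + t * ((p i - vv j) * d {j}))"
    unfolding mcf_obj_def by (intro sum.cong refl) (simp add: algebra_simps)
  then show ?thesis by (simp add: mcf_obj_def sum.distrib sum_distrib_left)
qed

lemma integral_improvement:
  assumes "feasible y"
  obtains z where "feasible z" "\<forall>I\<in>Ifam n T. z I \<in> \<int>" "cost z \<le> cost y"
proof -
  have "\<forall>I\<in>Ifam n T. of_int (l I) \<le> y I \<and> y I \<le> of_int (u I)"
    "\<forall>v\<in>nodes. sum y (arcs_in v) = sum y (arcs_out v)"
    using assms unfolding feasible_iff_network by blast+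
  from integral_flow_in_out[where obj = cost, OF finite_Ifam _ disjoint_arcs_in disjoint_arcs_out cost_add_scaled this]
  show thesis using arcs_subset_Ifam that unfolding feasible_iff_network by blast
qed

section \<open>Demand and optimal integral flows\<close>

lemma bundle_flow:
  assumes "q \<in> bundles"
  obtains y where "feasible y" "\<forall>I\<in>Ifam n T. y I \<in> \<int>" "\<forall>i\<in>{1..n}. real_of_int (q i) = y (R i)"
    and "cost y = price q - val q"
proof -
  obtain x where x: "feasible_x n m kk T l u q x" "val q = worth x"
    using val_attained[OF assms] .
  note y = assignment_flow[OF x(1)]
  show thesis using that[OF y(1-3)] y(4) x(2) by simp
qed

lemma integral_flow_bound:
  assumes "feasible y" "\<forall>I\<in>Ifam n T. y I \<in> \<int>" "\<forall>i\<in>{1..n}. real_of_int (q i) = y (R i)"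
  shows "q \<in> bundles" and "price q - val q \<le> cost y"
proof -
  have x: "feasible_x n m kk T l u q (\<lambda>j. \<lfloor>y {j}\<rfloor>)" "cost y = price q - worth (\<lambda>j. \<lfloor>y {j}\<rfloor>)"
    using flow_assignment[OF assms] by blast+
  then show "q \<in> bundles" by (auto simp: Qset_def)
  show "price q - val q \<le> cost y" using worth_le_val[OF x(1)] x(2) by simp
qed

lemma cost_lower_bound:
  assumes "feasible y"
  obtains q where "q \<in> bundles" "price q - val q \<le> cost y"
proof -
  obtain z where z: "feasible z" "\<forall>I\<in>Ifam n T. z I \<in> \<int>" "cost z \<le> cost y"
    using integral_improvement[OF assms] .
  define q where "q i = \<lfloor>z (R i)\<rfloor>" for i
  have "\<forall>i\<in>{1..n}. real_of_int (q i) = z (R i)"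
    using z(2) R_in_Ifam by (auto simp: q_def elim!: Ints_cases)
  from integral_flow_bound[OF z(1,2) this] z(3) show thesis by (intro that) auto
qed


lemma optimal_flow_of_demand:
  assumes q: "q \<in> bundles" and best: "\<forall>q'\<in>bundles. val q' - price q' \<le> val q - price q"
  shows "\<exists>y. mcf_optimal n m kk vv T l u p y \<and> (\<forall>I\<in>Ifam n T. y I \<in> \<int>) \<and>
    (\<forall>i\<in>{1..n}. real_of_int (q i) = y (R i))"
proof -
  obtain y where y: "feasible y" "\<forall>I\<in>Ifam n T. y I \<in> \<int>" "\<forall>i\<in>{1..n}. real_of_int (q i) = y (R i)"
    "cost y = price q - val q"
    using bundle_flow[OF q] .
  have "cost y \<le> cost y'" if y': "feasible y'" for y'
  proof -
    obtain q' where "q' \<in> bundles" "price q' - val q' \<le> cost y'"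
      using cost_lower_bound[OF y'] .
    then show ?thesis using best y(4) by fastforce
  qed
  then show ?thesis using y by (auto simp: mcf_optimal_def)
qed

lemma demand_of_optimal_flow:
  assumes opt: "mcf_optimal n m kk vv T l u p y"
    and y: "\<forall>I\<in>Ifam n T. y I \<in> \<int>" "\<forall>i\<in>{1..n}. real_of_int (q i) = y (R i)"
  shows "q \<in> bundles" and "\<forall>q'\<in>bundles. val q' - price q' \<le> val q - price q"
proof -
  have feasible: "feasible y" using opt by (simp add: mcf_optimal_def)
  show "q \<in> bundles" using integral_flow_bound(1)[OF feasible y] .
  show "\<forall>q'\<in>bundles. val q' - price q' \<le> val q - price q"
  proof
    fix q' assume "q' \<in> bundles"
    then obtain y' where "feasible y'" "cost y' = price q' - val q'" using bundle_flow by metis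
    then have "cost y \<le> price q' - val q'" using opt by (auto simp: mcf_optimal_def)
    then show "val q' - price q' \<le> val q - price q" using integral_flow_bound(2)[OF feasible y] by linarith
  qed
qed

end

theorem mainTheorem3:
  fixes n m :: nat and kk :: "nat \<Rightarrow> nat" and vv :: "nat \<Rightarrow> real"
    and T :: "nat \<Rightarrow> nat set set" and l u :: "nat set \<Rightarrow> int"
    and p :: "nat \<Rightarrow> real" and q :: "nat \<Rightarrow> int"
  assumes "n \<ge> 2"
    and "assignment_message n m kk T l u"
  shows "q \<in> demand n m kk vv T l u p \<longleftrightarrow>
    (\<exists>y. mcf_optimal n m kk vv T l u p y \<and> (\<forall>I\<in>Ifam n T. y I \<in> \<int>) \<and>
         (\<forall>i\<in>{1..n}. real_of_int (q i) = y (Rset m kk i)))"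
proof -
  interpret assignment_market n m kk vv T l u p using assms(2) by unfold_locales
  show ?thesis
    unfolding demand_def using optimal_flow_of_demand demand_of_optimal_flow by blast
qed

end
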